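(* There exists a universal constant $L'>1$ satisfying the following. Let $M$ be a $C^{1,1}$ $2$-manifold in $\mathbb{R}^3$ and let $p_0$ be an $\mathbb{H}$-regular point of $M$. Then there exist $\epsilon>0$ and an $L'$-bi-Lipschitz map $G:[-\epsilon,\epsilon]^2\to(M,|\cdot|)$ (Euclidean metrics on both sides) such that (1) $G(0,0)=p_0$, and (2) for all $v\in[-\epsilon,\epsilon]$, the curve $u\mapsto G(u,v)$ is a horizontal curve.
   Context: On $\mathbb{R}^3$ let $X=\partial_x-\tfrac12y\partial_z$, $Y=\partial_y+\tfrac12x\partial_z$, and $H_p=\mathrm{span}\{X(p),Y(p)\}$. A point $p$ of a $C^{1,1}$ $2$-manifold $M$ is characteristic if $T_pM=H_p$ and $\mathbb{H}$-regular otherwise. An absolutely continuous curve $(x(t),y(t),z(t))$ is horizontal if $z'+\tfrac12x'y-\tfrac12xy'=0$ almost everywhere. A map is $L'$-bi-Lipschitz if $L'^{-1}|a-b|\le|G(a)-G(b)|\le L'|a-b|$. *)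

theory Defs
  imports "HOL-Analysis.Analysis"
begin

text \<open>Points of R^3 are vectors of type real^3; coordinates x = p$1, y = p$2, z = p$3.\<close>

definition Xfield :: "real^3 \<Rightarrow> real^3" where
  "Xfield p = vector [1, 0, - (p$2) / 2]"

definition Yfield :: "real^3 \<Rightarrow> real^3" where
  "Yfield p = vector [0, 1, (p$1) / 2]"

definition Hplane :: "real^3 \<Rightarrow> (real^3) set" where
  "Hplane p = span {Xfield p, Yfield p}"

text \<open>A C^{1,1} local chart of M around p: a homeomorphism phi of an open V in R^2 onto
  M \<inter> U (U open in R^3, p in U), which is C^1 with injective differential D and whose
  differential is Lipschitz on V (C^{1,1}; Lipschitz-ness is local so charts may be shrunk).\<close>
definition c11_chart :: "(real^3) set \<Rightarrow> (real \<times> real) set \<Rightarrow> (real^3) set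
    \<Rightarrow> (real \<times> real \<Rightarrow> real^3) \<Rightarrow> (real \<times> real \<Rightarrow> real \<times> real \<Rightarrow> real^3) \<Rightarrow> bool" where
  "c11_chart M V U \<phi> D \<longleftrightarrow>
     open V \<and> open U \<and>
     (\<exists>\<psi>. homeomorphism V (M \<inter> U) \<phi> \<psi>) \<and>
     (\<forall>q\<in>V. (\<phi> has_derivative D q) (at q) \<and> inj (D q)) \<and>
     (\<exists>C. \<forall>q1\<in>V. \<forall>q2\<in>V. \<forall>h. norm (D q1 h - D q2 h) \<le> C * dist q1 q2 * norm h)"

definition c11_surface :: "(real^3) set \<Rightarrow> bool" where
  "c11_surface M \<longleftrightarrow>
     (\<forall>p\<in>M. \<exists>V U \<phi> D. p \<in> U \<and> c11_chart M V U \<phi> D)"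

text \<open>Tangent plane T_pM: the image of the differential of a chart at the preimage of p
  (independent of the chart).\<close>
definition tangent_plane :: "(real^3) set \<Rightarrow> real^3 \<Rightarrow> (real^3) set \<Rightarrow> bool" where
  "tangent_plane M p T \<longleftrightarrow>
     (\<exists>V U \<phi> D q. p \<in> U \<and> c11_chart M V U \<phi> D \<and> q \<in> V \<and> \<phi> q = p \<and> T = range (D q))"

definition characteristic :: "(real^3) set \<Rightarrow> real^3 \<Rightarrow> bool" where
  "characteristic M p \<longleftrightarrow> p \<in> M \<and> tangent_plane M p (Hplane p)"

definition H_regular :: "(real^3) set \<Rightarrow> real^3 \<Rightarrow> bool" where
  "H_regular M p \<longleftrightarrow> p \<in> M \<and> \<not> characteristic M p"

definition abs_continuous_on :: "real set \<Rightarrow> (real \<Rightarrow> 'a::real_normed_vector) \<Rightarrow> bool" where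
  "abs_continuous_on S f \<longleftrightarrow>
     (\<forall>e>0. \<exists>\<delta>>0. \<forall>n::nat. \<forall>a b :: nat \<Rightarrow> real.
        (\<forall>i<n. a i \<le> b i \<and> a i \<in> S \<and> b i \<in> S \<and> {a i..b i} \<subseteq> S) \<and>
        (\<forall>i<n. \<forall>j<n. i \<noteq> j \<longrightarrow> b i \<le> a j \<or> b j \<le> a i) \<and>
        (\<Sum>i<n. b i - a i) < \<delta>
        \<longrightarrow> (\<Sum>i<n. norm (f (b i) - f (a i))) < e)"

definition horizontal_curve :: "real \<Rightarrow> real \<Rightarrow> (real \<Rightarrow> real^3) \<Rightarrow> bool" where
  "horizontal_curve a b \<gamma> \<longleftrightarrow>
     abs_continuous_on {a..b} \<gamma> \<and>
     (AE t in lebesgue. t \<in> {a..b} \<longrightarrow>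
        (\<exists>d. (\<gamma> has_vector_derivative d) (at t) \<and>
             d$3 + (d$1) * (\<gamma> t $ 2) / 2 - (\<gamma> t $ 1) * (d$2) / 2 = 0))"

definition bi_lipschitz_on :: "real \<Rightarrow> 'a::metric_space set \<Rightarrow> ('a \<Rightarrow> 'b::metric_space) \<Rightarrow> bool" where
  "bi_lipschitz_on L S G \<longleftrightarrow>
     (\<forall>a\<in>S. \<forall>b\<in>S. dist a b / L \<le> dist (G a) (G b) \<and> dist (G a) (G b) \<le> L * dist a b)"

end

theory Submission
  imports Defs
begin

text \<open>Near an \<open>\<bbbH>\<close>-regular point the horizontal planes cut the tangent planes of \<open>M\<close> in a
  line field, Lipschitz because \<open>M\<close> is \<open>C\<^sup>1\<^sup>,\<^sup>1\<close>. In a chart \<open>P\<close> whose differential at \<open>0\<close> is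
  an isometry taking the first axis to a horizontal direction, this line field is spanned by
  \<open>(1, slope x)\<close> with \<open>slope\<close> Lipschitz. Solving \<open>y' = slope (u, y)\<close>, \<open>y 0 = v\<close>, by Picard
  iteration gives curves \<open>u \<mapsto> P (u, y\<^sub>v u)\<close> that are horizontal. On a small square,
  \<open>(u, v) \<mapsto> (u, y\<^sub>v u)\<close> is a small perturbation of the identity and \<open>P\<close> is almost an
  isometry, so \<open>G (u, v) = P (u, y\<^sub>v u)\<close> is \<open>2\<close>-bi-Lipschitz.\<close>

text \<open>The contact form \<open>dz + (y dx - x dy) / 2\<close>, whose kernel at \<open>p\<close> is \<open>H\<^sub>p\<close>.\<close>
definition contact_form :: "real^3 \<Rightarrow> real^3 \<Rightarrow> real" where
  "contact_form p d = d$3 + d$1 * (p$2) / 2 - (p$1) * (d$2) / 2"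

lemma linear_contact_form: "linear (contact_form p)"
  by (rule linearI) (simp_all add: contact_form_def divide_simps algebra_simps)

lemma contact_form_eq_0_imp_in_Hplane:
  assumes "contact_form p d = 0"
  shows "d \<in> Hplane p"
proof -
  have "d = (d$1) *\<^sub>R Xfield p + (d$2) *\<^sub>R Yfield p"
    using assms unfolding vec_eq_iff forall_3 contact_form_def Xfield_def Yfield_def
    by (simp add: algebra_simps)
  then show ?thesis
    unfolding Hplane_def by (metis span_add span_base span_scale insertI1 insertI2)
qed

lemma dim_Hplane_le: "dim (Hplane p) \<le> 2"
proof -
  have "dim (Hplane p) \<le> card {Xfield p, Yfield p}"
    unfolding Hplane_def by (rule dim_le_card) auto
  also have "\<dots> \<le> 2"
    by (simp add: card_insert_if)
  finally show ?thesis .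
qed

lemma H_regular_imp_contact_form_nonzero:
  assumes chart: "c11_chart M V U \<phi> D" and "p0 \<in> U" "q0 \<in> V" "\<phi> q0 = p0"
    and "H_regular M p0"
  shows "\<exists>h. contact_form p0 (D q0 h) \<noteq> 0"
proof (rule ccontr)
  assume "\<not> ?thesis"
  then have sub: "range (D q0) \<subseteq> Hplane p0"
    using contact_form_eq_0_imp_in_Hplane by auto
  have der: "(\<phi> has_derivative D q0) (at q0)" and inj: "inj (D q0)"
    using chart \<open>q0 \<in> V\<close> unfolding c11_chart_def by auto
  have lin: "linear (D q0)"
    using der has_derivative_linear by blast
  have "dim (range (D q0)) = dim (UNIV :: (real \<times> real) set)"
    using dim_image_eq[OF lin] inj by (metis inj_on_subset subset_UNIV)
  then have "dim (range (D q0)) = 2"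
    by simp
  then have "range (D q0) = Hplane p0"
    using sub dim_Hplane_le[of p0] unfolding Hplane_def
    by (intro subspace_dim_equal) (auto intro: linear_subspace_image[OF lin])
  then have "tangent_plane M p0 (Hplane p0)"
    unfolding tangent_plane_def using assms by blast
  then show False
    using \<open>H_regular M p0\<close> unfolding H_regular_def characteristic_def by blast
qed

lemma abs_contact_form_le: "\<bar>contact_form p d\<bar> \<le> (1 + norm p) * norm d"
proof -
  have "\<bar>d$1 * p$2\<bar> \<le> norm d * norm p" "\<bar>p$1 * d$2\<bar> \<le> norm p * norm d"
    by (simp_all add: abs_mult mult_mono component_le_norm_cart)
  then show ?thesis
    using component_le_norm_cart[of d 3]
    unfolding contact_form_def by (simp add: algebra_simps)
qed

lemma abs_contact_form_diff_le:
  "\<bar>contact_form p d - contact_form p' d'\<bar> \<le> (1 + norm p) * norm (d - d') + norm (p - p') * norm d'"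
proof -
  have "contact_form p d' - contact_form p' d' = (d'$1 * (p - p')$2 - (p - p')$1 * d'$2) / 2"
    by (simp add: contact_form_def algebra_simps)
  moreover have "\<bar>d'$1 * (p - p')$2\<bar> \<le> norm d' * norm (p - p')"
    "\<bar>(p - p')$1 * d'$2\<bar> \<le> norm (p - p') * norm d'"
    unfolding abs_mult by (intro mult_mono component_le_norm_cart; simp)+
  ultimately have "\<bar>contact_form p d' - contact_form p' d'\<bar> \<le> norm (p - p') * norm d'"
    by (simp add: algebra_simps)
  moreover have "contact_form p d - contact_form p' d' = contact_form p (d - d') + (contact_form p d' - contact_form p' d')"
    using linear_diff[OF linear_contact_form, of p d d'] by simp
  ultimately show ?thesis
    using abs_contact_form_le[of p "d - d'"] by linarith
qed

lemma abs_continuous_on_if_lipschitz_on: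
  assumes "C-lipschitz_on S g"
  shows "abs_continuous_on S g"
  unfolding abs_continuous_on_def
proof (intro allI impI)
  fix e :: real
  assume "e > 0"
  have C: "C \<ge> 0"
    using assms lipschitz_on_nonneg by blast
  have small_sum: "(\<Sum>i<n. norm (g (b i) - g (a i))) < e"
    if ab: "\<forall>i<n. a i \<le> b i \<and> a i \<in> S \<and> b i \<in> S \<and> {a i..b i} \<subseteq> S" and small: "(\<Sum>i<n. b i - a i) < e / (C + 1)"
    for n and a b :: "nat \<Rightarrow> real"
  proof -
    have "(\<Sum>i<n. norm (g (b i) - g (a i))) \<le> (\<Sum>i<n. C * (b i - a i))"
      using ab lipschitz_onD[OF assms] by (intro sum_mono) (force simp: dist_norm dist_real_def)
    also have "\<dots> = C * (\<Sum>i<n. b i - a i)"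
      by (simp add: sum_distrib_left)
    also have "\<dots> \<le> C * (e / (C + 1))"
      using small C by (intro mult_left_mono) auto
    also have "\<dots> < e"
      using \<open>e > 0\<close> C by (simp add: field_simps)
    finally show ?thesis .
  qed
  show "\<exists>\<delta>>0. \<forall>n::nat. \<forall>a b. (\<forall>i<n. a i \<le> b i \<and> a i \<in> S \<and> b i \<in> S \<and> {a i..b i} \<subseteq> S) \<and>
      (\<forall>i<n. \<forall>j<n. i \<noteq> j \<longrightarrow> b i \<le> a j \<or> b j \<le> a i) \<and> (\<Sum>i<n. b i - a i) < \<delta> \<longrightarrow>
      (\<Sum>i<n. norm (g (b i) - g (a i))) < e"
    using \<open>e > 0\<close> C by (intro exI[of _ "e / (C + 1)"] conjI allI impI small_sum) auto
qed

lemma horizontal_curve_if_lipschitz_on: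
  assumes "C-lipschitz_on {a..b} \<gamma>"
    and "\<And>t. t \<in> {a<..<b} \<Longrightarrow> \<exists>d. (\<gamma> has_vector_derivative d) (at t) \<and> contact_form (\<gamma> t) d = 0"
  shows "horizontal_curve a b \<gamma>"
proof -
  have "AE t in lebesgue. t \<in> {a..b} \<longrightarrow>
      (\<exists>d. (\<gamma> has_vector_derivative d) (at t) \<and> d$3 + (d$1) * (\<gamma> t $ 2) / 2 - (\<gamma> t $ 1) * (d$2) / 2 = 0)"
  proof (rule AE_I'[OF null_sets_completionI[OF finite_imp_null_set_lborel[of "{a, b}"]]])
    show "{t \<in> space lebesgue. \<not> (t \<in> {a..b} \<longrightarrow> (\<exists>d. (\<gamma> has_vector_derivative d) (at t) \<and>
        d$3 + (d$1) * (\<gamma> t $ 2) / 2 - (\<gamma> t $ 1) * (d$2) / 2 = 0))} \<subseteq> {a, b}"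
      using assms(2) unfolding contact_form_def by force
  qed simp
  then show ?thesis
    unfolding horizontal_curve_def using abs_continuous_on_if_lipschitz_on[OF assms(1)] by blast
qed

lemma bi_lipschitz_on_if_near_isometry:
  assumes isometry: "\<And>h. norm (L h) = norm h"
    and near: "\<And>z z'. z \<in> S \<Longrightarrow> z' \<in> S \<Longrightarrow> norm (g z - g z' - L (z - z')) \<le> \<eta> * norm (z - z')"
    and "\<eta> \<le> 1/2"
  shows "bi_lipschitz_on 2 S g"
  unfolding bi_lipschitz_on_def
proof (intro ballI conjI)
  fix z z' assume "z \<in> S" "z' \<in> S"
  have "norm (g z - g z') \<le> norm (L (z - z')) + norm (g z - g z' - L (z - z'))"
    "norm (L (z - z')) \<le> norm (g z - g z') + norm (g z - g z' - L (z - z'))"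
    using norm_triangle_sub[of "g z - g z'" "L (z - z')"] norm_triangle_sub[of "L (z - z')" "g z - g z'"]
    by (simp_all add: norm_minus_commute)
  then have "norm (g z - g z') \<le> 2 * norm (z - z')" "norm (z - z') / 2 \<le> norm (g z - g z')"
    using near[OF \<open>z \<in> S\<close> \<open>z' \<in> S\<close>] isometry[of "z - z'"] \<open>\<eta> \<le> 1/2\<close>
      mult_right_mono[OF \<open>\<eta> \<le> 1/2\<close> norm_ge_zero[of "z - z'"]]
    by linarith+
  then show "dist z z' / 2 \<le> dist (g z) (g z')" "dist (g z) (g z') \<le> 2 * dist z z'"
    by (simp_all add: dist_norm)
qed

lemma norm_orthonormal_combination:
  fixes e n :: "'a::real_inner"
  assumes "norm e = 1" "norm n = 1" "e \<bullet> n = 0"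
  shows "norm (s *\<^sub>R e + t *\<^sub>R n) = norm (s, t)"
proof -
  have "e \<bullet> e = 1" "n \<bullet> n = 1" "n \<bullet> e = 0"
    using assms by (simp_all add: inner_commute flip: power2_norm_eq_inner)
  then have "(norm (s *\<^sub>R e + t *\<^sub>R n))\<^sup>2 = s\<^sup>2 + t\<^sup>2"
    unfolding power2_norm_eq_inner using assms(3)
    by (simp add: inner_add_left inner_add_right power2_eq_square)
  from real_sqrt_unique[OF this norm_ge_zero] show ?thesis
    by (simp add: norm_Pair)
qed

lemma unit_vector_in_kernel:
  fixes L :: "real \<times> real \<Rightarrow> 'a::real_normed_vector" and l :: "'a \<Rightarrow> real"
  assumes "linear L" "inj L" "linear l" "l (L x) \<noteq> 0"
  obtains \<alpha> where "norm (L \<alpha>) = 1" "l (L \<alpha>) = 0"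
proof -
  interpret L: linear L by fact
  interpret l: linear l by fact
  have lL: "l (L (s, t)) = s * l (L (1, 0)) + t * l (L (0, 1))" for s t
  proof -
    have "(s, t) = s *\<^sub>R (1, 0) + t *\<^sub>R (0, 1)"
      by simp
    then show ?thesis
      by (metis L.add L.scale l.add l.scale real_scaleR_def)
  qed
  define k where "k = (l (L (0, 1)), - l (L (1, 0)))"
  have "k \<noteq> 0"
    using assms(4) lL[of "fst x" "snd x"] by (auto simp: k_def zero_prod_def)
  then have "L k \<noteq> 0"
    using \<open>inj L\<close> L.zero by (metis injD)
  moreover have "l (L k) = 0"
    using lL[of "l (L (0, 1))" "- l (L (1, 0))"] by (simp add: k_def)
  ultimately show ?thesis
    using that[of "(1 / norm (L k)) *\<^sub>R k"] by (simp add: L.scale l.scale)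
qed

text \<open>Gram--Schmidt applied to a unit vector spanning \<open>L (ker (l \<circ> L))\<close> and to \<open>L x\<close>.\<close>
lemma adapted_isometric_frame:
  fixes L :: "real \<times> real \<Rightarrow> 'a::real_inner" and l :: "'a \<Rightarrow> real"
  assumes "linear L" "inj L" "linear l" "l (L x) \<noteq> 0"
  obtains A :: "real \<times> real \<Rightarrow> real \<times> real"
  where "linear A" "\<And>h. norm (L (A h)) = norm h"
    "l (L (A (1, 0))) = 0" "l (L (A (0, 1))) \<noteq> 0"
proof -
  interpret L: linear L by fact
  interpret l: linear l by fact
  obtain \<alpha> where e: "norm (L \<alpha>) = 1" "l (L \<alpha>) = 0"
    using unit_vector_in_kernel[OF assms] by blast
  define \<gamma> where "\<gamma> = x - (L x \<bullet> L \<alpha>) *\<^sub>R \<alpha>"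
  have l\<gamma>: "l (L \<gamma>) = l (L x)"
    using e by (simp add: \<gamma>_def L.diff L.scale l.diff l.scale)
  have \<gamma>\<alpha>: "L \<gamma> \<bullet> L \<alpha> = 0"
    using e by (simp add: \<gamma>_def L.diff L.scale inner_diff_left flip: power2_norm_eq_inner)
  define \<beta> where "\<beta> = (1 / norm (L \<gamma>)) *\<^sub>R \<gamma>"
  have "L \<gamma> \<noteq> 0"
    using l\<gamma> assms(4) l.zero by auto
  then have n: "norm (L \<beta>) = 1" "l (L \<beta>) \<noteq> 0" "L \<alpha> \<bullet> L \<beta> = 0"
    using l\<gamma> assms(4) \<gamma>\<alpha> by (simp_all add: \<beta>_def L.scale l.scale inner_commute)
  define A where "A h = fst h *\<^sub>R \<alpha> + snd h *\<^sub>R \<beta>" for h :: "real \<times> real"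
  have "linear A"
    unfolding A_def by (rule linearI) (auto simp: algebra_simps)
  moreover have "norm (L (A h)) = norm h" for h
    using norm_orthonormal_combination[OF e(1) n(1) n(3), of "fst h" "snd h"]
    by (simp add: A_def L.add L.scale)
  moreover have "l (L (A (1, 0))) = 0" "l (L (A (0, 1))) \<noteq> 0"
    using e n by (simp_all add: A_def)
  ultimately show ?thesis
    by (rule that)
qed

lemma convergent_if_geometric_increments:
  fixes x :: "nat \<Rightarrow> real"
  assumes "\<And>n. \<bar>x (Suc n) - x n\<bar> \<le> C * (1/2)^n"
  shows "\<exists>l. x \<longlonglongrightarrow> l \<and> (\<forall>n. \<bar>x n - l\<bar> \<le> 2 * C * (1/2)^n)"
proof -
  define d where "d k = x (Suc k) - x k" for k
  have geometric: "summable (\<lambda>k. C * (1/2::real)^k)"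
    by (intro summable_mult summable_geometric) simp
  have d: "summable d"
    by (rule summable_comparison_test[OF _ geometric]) (use assms in \<open>auto simp: d_def\<close>)
  have partial_sums: "x 0 + (\<Sum>k<n. d k) = x n" for n
    by (simp add: d_def sum_lessThan_telescope)
  have lim: "x \<longlonglongrightarrow> x 0 + suminf d"
    using tendsto_add[OF tendsto_const[of "x 0"] summable_LIMSEQ[OF d]] by (simp only: partial_sums)
  have "\<bar>x n - (x 0 + suminf d)\<bar> \<le> 2 * C * (1/2)^n" for n
  proof -
    have "\<bar>x n - (x 0 + suminf d)\<bar> = norm (\<Sum>k. d (k + n))"
      unfolding partial_sums[of n, symmetric] suminf_minus_initial_segment[OF d] by simp
    also have "\<dots> \<le> (\<Sum>k. C * (1/2)^n * (1/2)^k)"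
    proof (rule norm_suminf_le)
      show "norm (d (k + n)) \<le> C * (1/2)^n * (1/2)^k" for k
        using assms[of "k + n"] by (simp add: d_def power_add mult_ac)
      show "summable (\<lambda>k. C * (1/2::real)^n * (1/2)^k)"
        by (intro summable_mult summable_geometric) simp
    qed
    also have "\<dots> = 2 * C * (1/2)^n"
      by (simp add: suminf_mult suminf_geometric)
    finally show ?thesis .
  qed
  with lim show ?thesis
    by blast
qed

lemma lipschitz_on_pointwise_limit:
  assumes "\<And>n. C-lipschitz_on S (f n)" and "\<And>x. x \<in> S \<Longrightarrow> (\<lambda>n. f n x) \<longlonglongrightarrow> g x"
  shows "C-lipschitz_on S g"
proof (rule lipschitz_onI)
  show "C \<ge> 0"
    using assms(1) lipschitz_on_nonneg by blast
  fix x y assume "x \<in> S" "y \<in> S"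
  have "(\<lambda>n. dist (f n x) (f n y)) \<longlonglongrightarrow> dist (g x) (g y)"
    using assms(2)[OF \<open>x \<in> S\<close>] assms(2)[OF \<open>y \<in> S\<close>] by (rule tendsto_dist)
  then show "dist (g x) (g y) \<le> C * dist x y"
    by (rule LIMSEQ_le_const2) (use assms(1) lipschitz_onD \<open>x \<in> S\<close> \<open>y \<in> S\<close> in blast)
qed

text \<open>The integral of \<open>g\<close> from \<open>0\<close> to \<open>u\<close>, for \<open>u \<in> [-e, e]\<close>; anchoring it at \<open>-e\<close> avoids
  oriented integrals.\<close>
definition primitive0 :: "real \<Rightarrow> (real \<Rightarrow> real) \<Rightarrow> real \<Rightarrow> real" where
  "primitive0 e g u = integral {-e..u} g - integral {-e..0} g"

lemma primitive0_at_0 [simp]: "primitive0 e g 0 = 0"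
  by (simp add: primitive0_def)

lemma lipschitz_on_primitive0:
  assumes g: "continuous_on {-e..e} g" and bound: "\<And>s. s \<in> {-e..e} \<Longrightarrow> \<bar>g s\<bar> \<le> B" and "B \<ge> 0"
  shows "B-lipschitz_on {-e..e} (primitive0 e g)"
proof -
  have ordered: "\<bar>primitive0 e g u - primitive0 e g u'\<bar> \<le> B * \<bar>u - u'\<bar>"
    if "u' \<le> u" "u' \<in> {-e..e}" "u \<in> {-e..e}" for u u'
  proof -
    have "integral {-e..u'} g + integral {u'..u} g = integral {-e..u} g"
      using that g by (intro Henstock_Kurzweil_Integration.integral_combine integrable_continuous_real) (auto intro: continuous_on_subset)
    moreover have "norm (integral {u'..u} g) \<le> B * (u - u')"
      using that by (intro integral_bound) (auto intro: continuous_on_subset[OF g] bound)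
    ultimately show ?thesis
      using \<open>u' \<le> u\<close> by (simp add: primitive0_def)
  qed
  show ?thesis
  proof (rule lipschitz_onI)
    fix u u' assume "u \<in> {-e..e}" "u' \<in> {-e..e}"
    then show "dist (primitive0 e g u) (primitive0 e g u') \<le> B * dist u u'"
      using ordered[of u' u] ordered[of u u'] unfolding dist_real_def
      by (cases "u' \<le> u") (simp_all add: abs_minus_commute)
  qed fact
qed

lemma abs_primitive0_le:
  assumes "continuous_on {-e..e} g" "\<And>s. s \<in> {-e..e} \<Longrightarrow> \<bar>g s\<bar> \<le> B" "B \<ge> 0" "u \<in> {-e..e}"
  shows "\<bar>primitive0 e g u\<bar> \<le> B * e"
proof -
  have "\<bar>primitive0 e g u - primitive0 e g 0\<bar> \<le> B * \<bar>u - 0\<bar>"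
    using lipschitz_onD[OF lipschitz_on_primitive0[OF assms(1-3)], of u 0] assms(4)
    by (simp add: dist_real_def)
  also have "\<dots> \<le> B * e"
    using assms(3,4) by (intro mult_left_mono) auto
  finally show ?thesis
    by simp
qed

lemma primitive0_diff:
  assumes "continuous_on {-e..e} g" "continuous_on {-e..e} h" "u \<in> {-e..e}"
  shows "primitive0 e g u - primitive0 e h u = primitive0 e (\<lambda>s. g s - h s) u"
proof -
  have "continuous_on {-e..0} g" "continuous_on {-e..0} h" "continuous_on {-e..u} g" "continuous_on {-e..u} h"
    using assms by (auto intro: continuous_on_subset)
  then show ?thesis
    unfolding primitive0_def by (simp add: integral_diff integrable_continuous_real)
qed

lemma has_real_derivative_primitive0:
  assumes "continuous_on {-e..e} g" "u \<in> {-e<..<e}"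
  shows "(primitive0 e g has_real_derivative g u) (at u)"
proof -
  have "((\<lambda>x. integral {-e..x} g) has_real_derivative g u) (at u within {-e..e})"
    using assms by (intro integral_has_real_derivative) auto
  then have "((\<lambda>x. integral {-e..x} g) has_real_derivative g u) (at u)"
    using assms(2) by (simp add: at_within_Icc_at)
  then show ?thesis
    unfolding primitive0_def[abs_def] by (auto intro!: derivative_eq_intros)
qed

text \<open>The condition \<open>K e \<le> \<eta> / 2\<close>
  makes each step contract by \<open>1/2\<close> and bounds the relative dependence of the solution on \<open>v\<close>
  by \<open>\<eta>\<close>.\<close>
locale picard_iteration =
  fixes F :: "real \<times> real \<Rightarrow> real" and K B e \<eta> :: real
  assumes lipschitz_F: "K-lipschitz_on UNIV F"
    and bounded_F: "\<And>x. \<bar>F x\<bar> \<le> B"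
    and e_pos: "0 < e" and small: "K * e \<le> \<eta> / 2" and \<eta>_pos: "0 < \<eta>" and \<eta>_le_1: "\<eta> \<le> 1"
begin

lemma B_nonneg: "B \<ge> 0"
  using bounded_F[of 0] by linarith

lemma continuous_on_F_graph:
  "continuous_on S y \<Longrightarrow> continuous_on S (\<lambda>s. F (s, y s))"
  by (rule continuous_on_compose2[OF lipschitz_on_continuous_on[OF lipschitz_F]])
    (auto intro: continuous_intros)

lemma primitive0_F_graph_diff_le:
  assumes "continuous_on {-e..e} y" "continuous_on {-e..e} y'"
    and close: "\<And>s. s \<in> {-e..e} \<Longrightarrow> \<bar>y s - y' s\<bar> \<le> d" and "u \<in> {-e..e}"
  shows "\<bar>primitive0 e (\<lambda>s. F (s, y s)) u - primitive0 e (\<lambda>s. F (s, y' s)) u\<bar> \<le> \<eta> / 2 * d"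
proof -
  have "d \<ge> 0"
    using close[of 0] e_pos by force
  have "\<bar>F (s, y s) - F (s, y' s)\<bar> \<le> K * d" if "s \<in> {-e..e}" for s
    using lipschitz_onD[OF lipschitz_F, of "(s, y s)" "(s, y' s)"] close[OF that]
      mult_left_mono[OF close[OF that] lipschitz_on_nonneg[OF lipschitz_F]]
    by (simp add: dist_Pair_Pair dist_real_def)
  then have "\<bar>primitive0 e (\<lambda>s. F (s, y s) - F (s, y' s)) u\<bar> \<le> K * d * e"
    using assms lipschitz_on_nonneg[OF lipschitz_F] \<open>d \<ge> 0\<close>
    by (intro abs_primitive0_le continuous_intros continuous_on_F_graph) auto
  also have "\<dots> \<le> \<eta> / 2 * d"
    using small \<open>d \<ge> 0\<close> mult_right_mono[OF small \<open>d \<ge> 0\<close>] by (simp add: mult_ac)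
  finally show ?thesis
    using primitive0_diff[OF continuous_on_F_graph continuous_on_F_graph, OF assms(1,2,4)] by simp
qed

fun iterate :: "nat \<Rightarrow> real \<Rightarrow> real \<Rightarrow> real" where
  "iterate 0 v u = v"
| "iterate (Suc n) v u = v + primitive0 e (\<lambda>s. F (s, iterate n v s)) u"

lemma lipschitz_iterate: "B-lipschitz_on {-e..e} (iterate n v)"
proof (induction n)
  case 0
  show ?case
    using B_nonneg by (simp add: lipschitz_on_def)
next
  case (Suc n)
  have "B-lipschitz_on {-e..e} (primitive0 e (\<lambda>s. F (s, iterate n v s)))"
    using lipschitz_on_continuous_on[OF Suc] bounded_F B_nonneg
    by (intro lipschitz_on_primitive0 continuous_on_F_graph)
  then show ?case
    using lipschitz_on_add[OF lipschitz_on_constant[of _ v]] by fastforce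
qed

lemma continuous_on_iterate: "continuous_on {-e..e} (iterate n v)"
  using lipschitz_iterate by (rule lipschitz_on_continuous_on)

lemma iterate_Suc_diff_le:
  "u \<in> {-e..e} \<Longrightarrow> \<bar>iterate (Suc n) v u - iterate n v u\<bar> \<le> B * e * (1/2)^n"
proof (induction n arbitrary: u)
  case 0
  then show ?case
    using bounded_F B_nonneg
    by (simp add: abs_primitive0_le continuous_on_F_graph continuous_on_iterate)
next
  case (Suc n)
  have "iterate (Suc (Suc n)) v u - iterate (Suc n) v u =
      primitive0 e (\<lambda>s. F (s, iterate (Suc n) v s)) u - primitive0 e (\<lambda>s. F (s, iterate n v s)) u"
    by (simp only: iterate.simps(2))
  also have "\<bar>\<dots>\<bar> \<le> \<eta> / 2 * (B * e * (1/2)^n)"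
    by (rule primitive0_F_graph_diff_le[OF continuous_on_iterate continuous_on_iterate Suc.IH Suc.prems])
  also have "\<dots> \<le> B * e * (1/2)^Suc n"
    using mult_right_mono[OF \<eta>_le_1, of "B * e * (1/2)^n"] B_nonneg e_pos by simp
  finally show ?case .
qed

lemma iterate_initial_value_diff_le:
  "u \<in> {-e..e} \<Longrightarrow> \<bar>iterate n v u - iterate n v' u - (v - v')\<bar> \<le> \<eta> * \<bar>v - v'\<bar>"
proof (induction n arbitrary: u)
  case 0
  then show ?case
    using \<eta>_pos by simp
next
  case (Suc n)
  have "iterate (Suc n) v u - iterate (Suc n) v' u - (v - v') =
      primitive0 e (\<lambda>s. F (s, iterate n v s)) u - primitive0 e (\<lambda>s. F (s, iterate n v' s)) u"
    by simp
  also have "\<bar>\<dots>\<bar> \<le> \<eta> / 2 * ((1 + \<eta>) * \<bar>v - v'\<bar>)"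
  proof (rule primitive0_F_graph_diff_le)
    show "\<bar>iterate n v s - iterate n v' s\<bar> \<le> (1 + \<eta>) * \<bar>v - v'\<bar>" if "s \<in> {-e..e}" for s
      using Suc.IH[OF that] by (simp add: algebra_simps)
  qed (use Suc.prems in \<open>simp_all add: continuous_on_iterate\<close>)
  also have "\<dots> \<le> \<eta> * \<bar>v - v'\<bar>"
  proof -
    have "\<eta> / 2 * (1 + \<eta>) \<le> \<eta>"
      using \<eta>_pos \<eta>_le_1 by (simp add: field_simps)
    from mult_right_mono[OF this abs_ge_zero[of "v - v'"]] show ?thesis
      by (simp add: mult.assoc)
  qed
  finally show ?case .
qed

definition solution :: "real \<Rightarrow> real \<Rightarrow> real" where
  "solution v u = lim (\<lambda>n. iterate n v u)"

lemma iterate_tendsto_solution: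
  assumes "u \<in> {-e..e}"
  shows "(\<lambda>n. iterate n v u) \<longlonglongrightarrow> solution v u"
    and "\<bar>iterate n v u - solution v u\<bar> \<le> 2 * (B * e) * (1/2)^n"
proof -
  have "\<exists>l. (\<lambda>n. iterate n v u) \<longlonglongrightarrow> l \<and> (\<forall>n. \<bar>iterate n v u - l\<bar> \<le> 2 * (B * e) * (1/2)^n)"
    by (rule convergent_if_geometric_increments) (rule iterate_Suc_diff_le[OF assms])
  then obtain l where "(\<lambda>n. iterate n v u) \<longlonglongrightarrow> l" "\<forall>n. \<bar>iterate n v u - l\<bar> \<le> 2 * (B * e) * (1/2)^n"
    by blast
  moreover from this(1) have "solution v u = l"
    unfolding solution_def by (rule limI)
  ultimately show "(\<lambda>n. iterate n v u) \<longlonglongrightarrow> solution v u"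
    "\<bar>iterate n v u - solution v u\<bar> \<le> 2 * (B * e) * (1/2)^n"
    by simp_all
qed

lemma solution_at_0 [simp]: "solution v 0 = v"
proof -
  have "iterate n v 0 = v" for n
    by (cases n) simp_all
  then show ?thesis
    by (simp add: solution_def)
qed

lemma lipschitz_solution: "B-lipschitz_on {-e..e} (solution v)"
  using lipschitz_iterate iterate_tendsto_solution(1) by (rule lipschitz_on_pointwise_limit)

lemma continuous_on_solution: "continuous_on {-e..e} (solution v)"
  using lipschitz_solution by (rule lipschitz_on_continuous_on)

lemma solution_initial_value_diff_le:
  assumes "u \<in> {-e..e}"
  shows "\<bar>solution v u - solution v' u - (v - v')\<bar> \<le> \<eta> * \<bar>v - v'\<bar>"
proof -
  have "(\<lambda>n. \<bar>iterate n v u - iterate n v' u - (v - v')\<bar>) \<longlonglongrightarrow> \<bar>solution v u - solution v' u - (v - v')\<bar>"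
    using iterate_tendsto_solution(1)[OF assms] by (intro tendsto_intros)
  then show ?thesis
    by (rule LIMSEQ_le_const2) (use iterate_initial_value_diff_le[OF assms] in auto)
qed

lemma solution_eq_integral:
  assumes "u \<in> {-e..e}"
  shows "solution v u = v + primitive0 e (\<lambda>s. F (s, solution v s)) u"
proof -
  let ?y = "v + primitive0 e (\<lambda>s. F (s, solution v s)) u"
  have bound: "norm (iterate (Suc n) v u - ?y) \<le> \<eta> / 2 * (2 * (B * e) * (1/2)^n)" for n
    unfolding real_norm_def iterate.simps(2) add_diff_cancel_left
    by (rule primitive0_F_graph_diff_le[OF continuous_on_iterate continuous_on_solution
          iterate_tendsto_solution(2) assms])
  have geometric: "(\<lambda>n. \<eta> / 2 * (2 * (B * e) * (1/2::real)^n)) \<longlonglongrightarrow> 0"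
    by (intro tendsto_mult_right_zero LIMSEQ_power_zero) simp
  have "(\<lambda>n. iterate (Suc n) v u) \<longlonglongrightarrow> ?y"
    by (rule LIM_zero_cancel[OF Lim_null_comparison[OF always_eventually[OF allI[OF bound]] geometric]])
  moreover have "(\<lambda>n. iterate (Suc n) v u) \<longlonglongrightarrow> solution v u"
    using iterate_tendsto_solution(1)[OF assms] by (rule LIMSEQ_Suc)
  ultimately show ?thesis
    using LIMSEQ_unique by blast
qed

lemma solution_has_real_derivative:
  assumes "u \<in> {-e<..<e}"
  shows "(solution v has_real_derivative F (u, solution v u)) (at u)"
proof -
  have "((\<lambda>u. v + primitive0 e (\<lambda>s. F (s, solution v s)) u) has_real_derivative F (u, solution v u)) (at u)"
    using has_real_derivative_primitive0[OF continuous_on_F_graph[OF continuous_on_solution] assms]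
    by (auto intro!: derivative_eq_intros)
  then show ?thesis
    by (rule has_field_derivative_transform_within_open[of _ _ _ "{-e<..<e}"])
      (use assms solution_eq_integral in auto)
qed

lemma norm_graph_le:
  assumes "u \<in> {-e..e}" "v \<in> {-e..e}"
  shows "norm (u, solution v u) \<le> (2 + B) * e"
proof -
  have "\<bar>solution v u - solution v 0\<bar> \<le> B * \<bar>u - 0\<bar>"
    using lipschitz_onD[OF lipschitz_solution, of u 0] assms e_pos by (simp add: dist_real_def)
  moreover have "\<bar>u\<bar> \<le> e" "\<bar>v\<bar> \<le> e"
    using assms by auto
  moreover have "B * \<bar>u\<bar> \<le> B * e"
    using \<open>\<bar>u\<bar> \<le> e\<close> B_nonneg by (rule mult_left_mono)
  ultimately show ?thesis
    using norm_Pair_le[of u "solution v u"] abs_triangle_ineq2[of "solution v u" v] by (simp add: algebra_simps)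
qed

lemma graph_map_near_identity:
  assumes "u \<in> {-e..e}" "u' \<in> {-e..e}"
  shows "norm ((u, solution v u) - (u', solution v' u') - ((u, v) - (u', v'))) \<le> (B + \<eta>) * norm ((u, v) - (u', v'))"
proof -
  have "norm ((u, solution v u) - (u', solution v' u') - ((u, v) - (u', v'))) = \<bar>solution v u - solution v' u' - (v - v')\<bar>"
    by (simp add: norm_Pair)
  also have "\<dots> \<le> \<bar>solution v u - solution v u'\<bar> + \<bar>solution v u' - solution v' u' - (v - v')\<bar>"
    by linarith
  also have "\<dots> \<le> B * \<bar>u - u'\<bar> + \<eta> * \<bar>v - v'\<bar>"
    using lipschitz_onD[OF lipschitz_solution assms] solution_initial_value_diff_le[OF assms(2)]
    by (intro add_mono) (simp_all add: dist_real_def)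
  also have "\<dots> \<le> B * norm ((u, v) - (u', v')) + \<eta> * norm ((u, v) - (u', v'))"
    using B_nonneg \<eta>_pos norm_fst_le[of "u - u'" "v - v'"] norm_snd_le[of "v - v'" "u - u'"]
    by (intro add_mono mult_left_mono) simp_all
  finally show ?thesis
    by (simp add: algebra_simps)
qed

end

lemma mult_min_divide_le:
  fixes K d a :: real
  assumes "0 \<le> K" "0 \<le> d"
  shows "K * min a (d / (K + 1)) \<le> d"
proof -
  have "K * min a (d / (K + 1)) \<le> K * (d / (K + 1))"
    using assms by (intro mult_left_mono) auto
  also have "\<dots> \<le> d"
    using assms by (simp add: field_simps)
  finally show ?thesis .
qed

lemma picard_iteration_on_small_interval:
  assumes "K-lipschitz_on UNIV F" "\<And>x. \<bar>F x\<bar> \<le> B" "0 < \<eta>" "\<eta> \<le> 1" "0 < \<rho>"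
  obtains e where "0 < e" "e \<le> \<rho>" "picard_iteration F K B e \<eta>"
proof
  define e where "e = min \<rho> ((\<eta> / 2) / (K + 1))"
  have "K \<ge> 0"
    using assms(1) lipschitz_on_nonneg by blast
  then show "0 < e" "e \<le> \<rho>"
    using assms(3,5) by (auto simp: e_def)
  have "K * e \<le> \<eta> / 2"
    unfolding e_def using \<open>K \<ge> 0\<close> assms(3) by (intro mult_min_divide_le) auto
  then show "picard_iteration F K B e \<eta>"
    using assms \<open>0 < e\<close> by unfold_locales auto
qed

lemma lipschitz_on_divide:
  fixes a b :: "'a::metric_space \<Rightarrow> real"
  assumes a: "K-lipschitz_on S a" and b: "K-lipschitz_on S b"
    and bounds: "\<And>x. x \<in> S \<Longrightarrow> \<bar>a x\<bar> \<le> A" "\<And>x. x \<in> S \<Longrightarrow> m \<le> \<bar>b x\<bar>" "\<And>x. x \<in> S \<Longrightarrow> \<bar>b x\<bar> \<le> M"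
    and "0 < m" "S \<noteq> {}"
  shows "(K * (A + M) / m\<^sup>2)-lipschitz_on S (\<lambda>x. a x / b x)"
proof (rule lipschitz_onI)
  have "K \<ge> 0"
    using a lipschitz_on_nonneg by blast
  fix x y assume "x \<in> S" "y \<in> S"
  have b0: "b x \<noteq> 0" "b y \<noteq> 0"
    using bounds(2)[OF \<open>x \<in> S\<close>] bounds(2)[OF \<open>y \<in> S\<close>] \<open>0 < m\<close> by auto
  have "\<bar>(a x - a y) * b y\<bar> \<le> K * dist x y * M" "\<bar>a y * (b y - b x)\<bar> \<le> A * (K * dist x y)"
    using lipschitz_onD[OF a \<open>x \<in> S\<close> \<open>y \<in> S\<close>] lipschitz_onD[OF b \<open>y \<in> S\<close> \<open>x \<in> S\<close>]
      bounds(1)[OF \<open>y \<in> S\<close>] bounds(3)[OF \<open>y \<in> S\<close>]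
    unfolding abs_mult by (intro mult_mono; simp add: dist_real_def dist_commute)+
  then have "\<bar>(a x - a y) * b y + a y * (b y - b x)\<bar> \<le> K * dist x y * M + A * (K * dist x y)"
    by (intro abs_triangle_ineq[THEN order_trans] add_mono)
  moreover have "m\<^sup>2 \<le> \<bar>b x * b y\<bar>"
    unfolding abs_mult power2_eq_square
    using bounds(2)[OF \<open>x \<in> S\<close>] bounds(2)[OF \<open>y \<in> S\<close>] \<open>0 < m\<close> by (intro mult_mono) auto
  moreover have "\<bar>a x / b x - a y / b y\<bar> = \<bar>(a x - a y) * b y + a y * (b y - b x)\<bar> / \<bar>b x * b y\<bar>"
    using b0 by (simp add: field_simps flip: abs_divide)
  moreover have "0 \<le> K * dist x y * M + A * (K * dist x y)"
    using bounds(1,3)[OF \<open>y \<in> S\<close>] \<open>K \<ge> 0\<close> by simp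
  ultimately have "\<bar>a x / b x - a y / b y\<bar> \<le> (K * dist x y * M + A * (K * dist x y)) / m\<^sup>2"
    using \<open>0 < m\<close> by (simp add: frac_le)
  then show "dist (a x / b x) (a y / b y) \<le> K * (A + M) / m\<^sup>2 * dist x y"
    by (simp add: dist_real_def field_simps)
next
  obtain x where "x \<in> S"
    using \<open>S \<noteq> {}\<close> by blast
  then have "0 \<le> A + M"
    using bounds(1,3)[of x] by linarith
  then show "0 \<le> K * (A + M) / m\<^sup>2"
    using lipschitz_on_nonneg[OF a] by simp
qed

lemma lipschitz_on_closest_point_extension:
  fixes f :: "'a::{real_inner,heine_borel} \<Rightarrow> 'b::metric_space"
  assumes "K-lipschitz_on (cball c \<rho>) f" "0 \<le> \<rho>"
  shows "K-lipschitz_on UNIV (\<lambda>x. f (closest_point (cball c \<rho>) x))"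
proof -
  have "(K * 1)-lipschitz_on UNIV (\<lambda>x. f (closest_point (cball c \<rho>) x))"
  proof (rule lipschitz_on_compose2[where f = "closest_point (cball c \<rho>)" and g = f])
    show "1-lipschitz_on UNIV (closest_point (cball c \<rho>))"
      using assms(2) by (intro lipschitz_onI) (auto intro!: closest_point_lipschitz)
    show "K-lipschitz_on (closest_point (cball c \<rho>) ` UNIV) f"
      using assms closest_point_in_set[of "cball c \<rho>"] by (intro lipschitz_on_subset[OF assms(1)]) fastforce
  qed
  then show ?thesis
    by simp
qed

lemma lipschitz_on_section_if_bi_lipschitz_on:
  assumes "bi_lipschitz_on L S G" "0 \<le> L" "\<And>u. u \<in> I \<Longrightarrow> (u, v) \<in> S"
  shows "L-lipschitz_on I (\<lambda>u. G (u, v))"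
proof (rule lipschitz_onI)
  fix s t assume "s \<in> I" "t \<in> I"
  then have "dist (G (s, v)) (G (t, v)) \<le> L * dist (s, v) (t, v)"
    using assms(1,3) unfolding bi_lipschitz_on_def by blast
  then show "dist (G (s, v)) (G (t, v)) \<le> L * dist s t"
    by (simp add: dist_Pair_Pair)
qed fact

locale regular_patch =
  fixes P :: "real \<times> real \<Rightarrow> real^3" and DP :: "real \<times> real \<Rightarrow> real \<times> real \<Rightarrow> real^3"
    and r C :: real
  assumes r_pos: "0 < r"
    and has_derivative_P: "\<And>x. x \<in> cball 0 r \<Longrightarrow> (P has_derivative DP x) (at x)"
    and lipschitz_DP: "\<And>x y h. x \<in> cball 0 r \<Longrightarrow> y \<in> cball 0 r \<Longrightarrow>
      norm (DP x h - DP y h) \<le> C * norm (x - y) * norm h"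
    and C_nonneg: "0 \<le> C"
    and isometric_DP0: "\<And>h. norm (DP 0 h) = norm h"
    and horizontal_DP0_1: "contact_form (P 0) (DP 0 (1, 0)) = 0"
    and not_horizontal_DP0_2: "contact_form (P 0) (DP 0 (0, 1)) \<noteq> 0"
begin

lemma linear_DP: "x \<in> cball 0 r \<Longrightarrow> linear (DP x)"
  using has_derivative_P has_derivative_linear by blast

definition r_lin :: real where
  "r_lin = min r ((1/8) / (C + 1))"

lemma r_lin: "0 < r_lin" "r_lin \<le> r" "C * r_lin \<le> 1/8"
proof -
  show "0 < r_lin" "r_lin \<le> r"
    using r_pos C_nonneg by (auto simp: r_lin_def)
  show "C * r_lin \<le> 1/8"
    unfolding r_lin_def using C_nonneg by (rule mult_min_divide_le) simp
qed

lemma cball_r_lin_subset: "cball 0 r_lin \<subseteq> cball 0 r"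
  using r_lin by auto

lemma DP_close_to_DP0:
  assumes "x \<in> cball 0 r_lin"
  shows "norm (DP x h - DP 0 h) \<le> norm h / 8"
proof -
  have "norm (DP x h - DP 0 h) \<le> C * norm (x - 0) * norm h"
    using assms r_lin r_pos by (intro lipschitz_DP) auto
  also have "\<dots> \<le> C * r_lin * norm h"
    using assms C_nonneg by (intro mult_right_mono mult_left_mono) auto
  also have "\<dots> \<le> norm h / 8"
    using r_lin(3) mult_right_mono[OF r_lin(3) norm_ge_zero[of h]] by simp
  finally show ?thesis .
qed

lemma norm_DP_le: "x \<in> cball 0 r_lin \<Longrightarrow> norm (DP x h) \<le> 9/8 * norm h"
  using DP_close_to_DP0[of x h] isometric_DP0[of h] norm_triangle_sub[of "DP x h" "DP 0 h"] by simp

lemma linearization_error: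
  assumes "x \<in> cball 0 r_lin" "y \<in> cball 0 r_lin"
  shows "norm (P x - P y - DP 0 (x - y)) \<le> norm (x - y) / 8"
proof -
  have "norm (P x - P y - DP 0 (x - y)) \<le> norm (x - y) * (1/8)"
  proof (rule differentiable_bound_linearization[where S = "cball 0 r_lin"])
    show "y + t *\<^sub>R (x - y) \<in> cball 0 r_lin" if "t \<in> {0..1}" for t
      using convexD_alt[OF convex_cball assms(2) assms(1), of t] that by (simp add: algebra_simps)
    show "(P has_derivative DP z) (at z within cball 0 r_lin)" if "z \<in> cball 0 r_lin" for z
      using that cball_r_lin_subset by (intro has_derivative_at_withinI[OF has_derivative_P]) blast
    show "onorm (DP z - DP 0) \<le> 1/8" if "z \<in> cball 0 r_lin" for z
      using DP_close_to_DP0[OF that] by (intro onorm_le) simp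
  qed (use r_lin in simp)
  then show ?thesis
    by simp
qed

lemma norm_P_diff_le:
  "x \<in> cball 0 r_lin \<Longrightarrow> y \<in> cball 0 r_lin \<Longrightarrow> norm (P x - P y) \<le> 9/8 * norm (x - y)"
  using linearization_error[of x y] isometric_DP0[of "x - y"] norm_triangle_sub[of "P x - P y" "DP 0 (x - y)"]
  by simp

definition contact_coeff :: "real \<times> real \<Rightarrow> real \<times> real \<Rightarrow> real" where
  "contact_coeff w x = contact_form (P x) (DP x w)"

lemma lipschitz_contact_coeff:
  obtains K where "\<And>w. norm w = 1 \<Longrightarrow> K-lipschitz_on (cball 0 r_lin) (contact_coeff w)"
proof
  define K where "K = (1 + norm (P 0) + 9/8 * r_lin) * C + 9/8 * (9/8)"
  fix w :: "real \<times> real" assume "norm w = 1"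
  show "K-lipschitz_on (cball 0 r_lin) (contact_coeff w)"
  proof (rule lipschitz_onI)
    fix x y :: "real \<times> real" assume x: "x \<in> cball 0 r_lin" and y: "y \<in> cball 0 r_lin"
    have "norm (P x) \<le> norm (P 0) + 9/8 * r_lin"
      using norm_P_diff_le[OF x, of 0] norm_triangle_sub[of "P x" "P 0"] x r_lin by simp
    then have "(1 + norm (P x)) * norm (DP x w - DP y w) \<le> (1 + norm (P 0) + 9/8 * r_lin) * (C * norm (x - y))"
      using lipschitz_DP[of x y w] x y r_lin \<open>norm w = 1\<close> by (intro mult_mono) simp_all
    moreover have "norm (P x - P y) * norm (DP y w) \<le> (9/8 * norm (x - y)) * (9/8)"
      using norm_P_diff_le[OF x y] norm_DP_le[OF y, of w] \<open>norm w = 1\<close> by (intro mult_mono) simp_all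
    ultimately have "(1 + norm (P x)) * norm (DP x w - DP y w) + norm (P x - P y) * norm (DP y w)
        \<le> (1 + norm (P 0) + 9/8 * r_lin) * (C * norm (x - y)) + (9/8 * norm (x - y)) * (9/8)"
      by (rule add_mono)
    then show "dist (contact_coeff w x) (contact_coeff w y) \<le> K * dist x y"
      using abs_contact_form_diff_le[of "P x" "DP x w" "P y" "DP y w"]
      by (simp add: contact_coeff_def dist_real_def dist_norm K_def algebra_simps)
  qed (use C_nonneg r_lin in \<open>simp add: K_def\<close>)
qed

definition slope :: "real \<times> real \<Rightarrow> real" where
  "slope x = - contact_coeff (1, 0) x / contact_coeff (0, 1) x"

lemma slope_at_0 [simp]: "slope 0 = 0"
  using horizontal_DP0_1 by (simp add: slope_def contact_coeff_def)

lemma contact_form_slope_direction: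
  assumes "x \<in> cball 0 r" "contact_coeff (0, 1) x \<noteq> 0"
  shows "contact_form (P x) (DP x (1, slope x)) = 0"
proof -
  have "DP x (1, slope x) = DP x ((1, 0) + slope x *\<^sub>R (0, 1))"
    by simp
  also have "\<dots> = DP x (1, 0) + slope x *\<^sub>R DP x (0, 1)"
    using linear_DP[OF assms(1)] by (simp only: linear_add linear_scale)
  finally have "DP x (1, slope x) = DP x (1, 0) + slope x *\<^sub>R DP x (0, 1)" .
  then show ?thesis
    using assms(2) by (simp add: linear_add[OF linear_contact_form] linear_scale[OF linear_contact_form]
        linear_diff[OF linear_contact_form] slope_def contact_coeff_def)
qed

lemma contact_coeff_near_0:
  obtains r' K where "0 < r'" "r' \<le> r_lin" "\<And>w. norm w = 1 \<Longrightarrow> K-lipschitz_on (cball 0 r') (contact_coeff w)"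
    "\<And>w x. norm w = 1 \<Longrightarrow> x \<in> cball 0 r' \<Longrightarrow>
      \<bar>contact_coeff w x - contact_coeff w 0\<bar> \<le> \<bar>contact_coeff (0, 1) 0\<bar> / 2"
proof -
  obtain K where K: "\<And>w. norm w = 1 \<Longrightarrow> K-lipschitz_on (cball 0 r_lin) (contact_coeff w)"
    using lipschitz_contact_coeff by blast
  have "K \<ge> 0"
    using K[of "(1, 0)"] lipschitz_on_nonneg by simp
  define c where "c = \<bar>contact_coeff (0, 1) 0\<bar>"
  define r' where "r' = min r_lin ((c / 2) / (K + 1))"
  have "c > 0"
    using not_horizontal_DP0_2 by (simp add: c_def contact_coeff_def)
  then have r': "0 < r'" "r' \<le> r_lin" "K * r' \<le> c / 2"
    using r_lin \<open>K \<ge> 0\<close> mult_min_divide_le[of K "c / 2" r_lin] by (auto simp: r'_def)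
  have "\<bar>contact_coeff w x - contact_coeff w 0\<bar> \<le> c / 2" if "norm w = 1" "x \<in> cball 0 r'" for w x
  proof -
    have "\<bar>contact_coeff w x - contact_coeff w 0\<bar> \<le> K * norm x"
      using lipschitz_onD[OF K[OF \<open>norm w = 1\<close>], of x 0] that r' r_lin by (simp add: dist_real_def)
    also have "\<dots> \<le> K * r'"
      using that \<open>K \<ge> 0\<close> by (intro mult_left_mono) auto
    finally show ?thesis
      using r'(3) by linarith
  qed
  moreover have "K-lipschitz_on (cball 0 r') (contact_coeff w)" if "norm w = 1" for w
    using r' by (intro lipschitz_on_subset[OF K[OF that]]) auto
  ultimately show ?thesis
    using that r' unfolding c_def by blast
qed

lemma lipschitz_slope_near_0:
  obtains r' K where "0 < r'" "r' \<le> r_lin" "K-lipschitz_on (cball 0 r') slope"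
    "\<And>x. x \<in> cball 0 r' \<Longrightarrow> contact_coeff (0, 1) x \<noteq> 0"
proof -
  obtain r' K where r': "0 < r'" "r' \<le> r_lin"
    and K: "\<And>w. norm w = 1 \<Longrightarrow> K-lipschitz_on (cball 0 r') (contact_coeff w)"
    and close: "\<And>w x. norm w = 1 \<Longrightarrow> x \<in> cball 0 r' \<Longrightarrow>
      \<bar>contact_coeff w x - contact_coeff w 0\<bar> \<le> \<bar>contact_coeff (0, 1) 0\<bar> / 2"
    by (rule contact_coeff_near_0) blast
  define c where "c = \<bar>contact_coeff (0, 1) 0\<bar>"
  have "c > 0"
    using not_horizontal_DP0_2 by (simp add: c_def contact_coeff_def)
  have b: "c/2 \<le> \<bar>contact_coeff (0, 1) x\<bar>" "\<bar>contact_coeff (0, 1) x\<bar> \<le> 3*c/2" if "x \<in> cball 0 r'" for x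
    using close[of "(0, 1)" x] that abs_triangle_ineq2[of "contact_coeff (0, 1) x" "contact_coeff (0, 1) 0"]
      abs_triangle_ineq2[of "contact_coeff (0, 1) 0" "contact_coeff (0, 1) x"]
      abs_minus_commute[of "contact_coeff (0, 1) 0" "contact_coeff (0, 1) x"]
    unfolding c_def by auto
  have "(K * (c/2 + 3*c/2) / (c/2)\<^sup>2)-lipschitz_on (cball 0 r') (\<lambda>x. contact_coeff (1, 0) x / contact_coeff (0, 1) x)"
  proof (rule lipschitz_on_divide[OF K K])
    show "\<bar>contact_coeff (1, 0) x\<bar> \<le> c/2" if "x \<in> cball 0 r'" for x
      using close[of "(1, 0)" x] that horizontal_DP0_1 by (simp add: c_def contact_coeff_def)
  qed (use \<open>c > 0\<close> r' b in auto)
  then have "(K * (c/2 + 3*c/2) / (c/2)\<^sup>2)-lipschitz_on (cball 0 r') slope"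
    unfolding slope_def minus_divide_left[symmetric] by (rule lipschitz_on_minus)
  moreover have "contact_coeff (0, 1) x \<noteq> 0" if "x \<in> cball 0 r'" for x
    using b[OF that] \<open>c > 0\<close> by auto
  ultimately show ?thesis
    using that r' by blast
qed

lemma horizontal_curve_along_slope_field:
  assumes "L-lipschitz_on {a..b} (\<lambda>u. P (u, y u))"
    and "\<And>t. t \<in> {a<..<b} \<Longrightarrow> (y has_real_derivative slope (t, y t)) (at t)"
    and "\<And>t. t \<in> {a<..<b} \<Longrightarrow> (t, y t) \<in> cball 0 r \<and> contact_coeff (0, 1) (t, y t) \<noteq> 0"
  shows "horizontal_curve a b (\<lambda>u. P (u, y u))"
proof (rule horizontal_curve_if_lipschitz_on[OF assms(1)])
  fix t assume t: "t \<in> {a<..<b}"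
  define x where "x = (t, y t)"
  have "((\<lambda>u. (u, y u)) has_vector_derivative (1, slope x)) (at t)"
    using assms(2)[OF t] unfolding x_def has_real_derivative_iff_has_vector_derivative
    by (intro has_vector_derivative_Pair has_vector_derivative_id)
  then have "((P \<circ> (\<lambda>u. (u, y u))) has_derivative DP x \<circ> (\<lambda>h. h *\<^sub>R (1, slope x))) (at t)"
    using has_derivative_P assms(3)[OF t] unfolding has_vector_derivative_def x_def
    by (intro diff_chain_at) auto
  moreover have "DP x \<circ> (\<lambda>h. h *\<^sub>R (1, slope x)) = (\<lambda>h. h *\<^sub>R DP x (1, slope x))"
    using linear_DP assms(3)[OF t] by (intro ext) (simp add: linear_scale x_def del: scaleR_Pair)
  ultimately have "((\<lambda>u. P (u, y u)) has_vector_derivative DP x (1, slope x)) (at t)"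
    by (simp add: has_vector_derivative_def o_def)
  moreover have "contact_form (P (t, y t)) (DP x (1, slope x)) = 0"
    using contact_form_slope_direction assms(3)[OF t] by (simp add: x_def)
  ultimately show "\<exists>d. ((\<lambda>u. P (u, y u)) has_vector_derivative d) (at t) \<and> contact_form (P (t, y t)) d = 0"
    by blast
qed

lemma bi_lipschitz_on_P_comp:
  assumes into: "\<And>z. z \<in> S \<Longrightarrow> \<Psi> z \<in> cball 0 r_lin"
    and near_id: "\<And>z z'. z \<in> S \<Longrightarrow> z' \<in> S \<Longrightarrow> norm (\<Psi> z - \<Psi> z' - (z - z')) \<le> norm (z - z') / 4"
  shows "bi_lipschitz_on 2 S (\<lambda>z. P (\<Psi> z))"
proof (rule bi_lipschitz_on_if_near_isometry[OF isometric_DP0])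
  fix z z' assume "z \<in> S" "z' \<in> S"
  define w where "w = \<Psi> z - \<Psi> z'"
  have "norm (w - (z - z')) \<le> norm (z - z') / 4"
    unfolding w_def by (rule near_id[OF \<open>z \<in> S\<close> \<open>z' \<in> S\<close>])
  moreover have "norm (P (\<Psi> z) - P (\<Psi> z') - DP 0 w) \<le> norm w / 8"
    unfolding w_def using into \<open>z \<in> S\<close> \<open>z' \<in> S\<close> by (intro linearization_error) auto
  moreover have "P (\<Psi> z) - P (\<Psi> z') - DP 0 (z - z') = (P (\<Psi> z) - P (\<Psi> z') - DP 0 w) + DP 0 (w - (z - z'))"
    using linear_diff[OF linear_DP, of 0 w "z - z'"] r_pos by simp
  then have "norm (P (\<Psi> z) - P (\<Psi> z') - DP 0 (z - z')) \<le> norm (P (\<Psi> z) - P (\<Psi> z') - DP 0 w) + norm (w - (z - z'))"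
    by (metis norm_triangle_ineq isometric_DP0)
  ultimately show "norm (P (\<Psi> z) - P (\<Psi> z') - DP 0 (z - z')) \<le> 1/2 * norm (z - z')"
    using norm_triangle_sub[of w "z - z'"] norm_ge_zero[of "z - z'"] by linarith
qed simp

lemma bounded_lipschitz_slope_extension:
  obtains F :: "real \<times> real \<Rightarrow> real" and K \<rho> where "0 < \<rho>" "\<rho> \<le> r_lin" "K-lipschitz_on UNIV F"
    "\<And>x. \<bar>F x\<bar> \<le> 1/8"
    "\<And>x. x \<in> cball 0 \<rho> \<Longrightarrow> F x = slope x \<and> contact_coeff (0, 1) x \<noteq> 0"
proof -
  obtain r' K where r': "0 < r'" "r' \<le> r_lin" and K: "K-lipschitz_on (cball 0 r') slope"
    and nonzero: "\<And>x. x \<in> cball 0 r' \<Longrightarrow> contact_coeff (0, 1) x \<noteq> 0"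
    by (rule lipschitz_slope_near_0) blast
  have "K \<ge> 0"
    using K lipschitz_on_nonneg by blast
  define \<rho> where "\<rho> = min r' ((1/8) / (K + 1))"
  have \<rho>: "0 < \<rho>" "\<rho> \<le> r'" "K * \<rho> \<le> 1/8"
    using r' \<open>K \<ge> 0\<close> mult_min_divide_le[of K "1/8" r'] by (auto simp: \<rho>_def)
  have K\<rho>: "K-lipschitz_on (cball 0 \<rho>) slope"
    by (rule lipschitz_on_subset[OF K]) (use \<rho> in auto)
  define F where "F x = slope (closest_point (cball 0 \<rho>) x)" for x
  have "\<bar>F x\<bar> \<le> 1/8" for x
  proof -
    have "closest_point (cball 0 \<rho>) x \<in> cball 0 \<rho>"
      using \<rho> by (intro closest_point_in_set) auto
    then have "\<bar>F x - slope 0\<bar> \<le> K * \<rho>"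
      using lipschitz_onD[OF K\<rho>, of "closest_point (cball 0 \<rho>) x" 0] \<rho> \<open>K \<ge> 0\<close>
        mult_left_mono[of _ \<rho> K] by (force simp: F_def dist_real_def)
    then show ?thesis
      using \<rho> by simp
  qed
  moreover have "F x = slope x \<and> contact_coeff (0, 1) x \<noteq> 0" if "x \<in> cball 0 \<rho>" for x
    using that \<rho> nonzero by (simp add: F_def closest_point_self)
  moreover have "K-lipschitz_on UNIV F"
    unfolding F_def[abs_def] using K\<rho> \<rho> by (intro lipschitz_on_closest_point_extension) auto
  ultimately show ?thesis
    using that \<rho> r' by simp
qed

theorem horizontal_bi_lipschitz_parametrization:
  "\<exists>\<epsilon>>0. \<exists>G. G ` cbox (-\<epsilon>, -\<epsilon>) (\<epsilon>, \<epsilon>) \<subseteq> P ` cball 0 r \<and> bi_lipschitz_on 2 (cbox (-\<epsilon>, -\<epsilon>) (\<epsilon>, \<epsilon>)) G \<and>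
     G (0, 0) = P 0 \<and> (\<forall>v\<in>{-\<epsilon>..\<epsilon>}. horizontal_curve (-\<epsilon>) \<epsilon> (\<lambda>u. G (u, v)))"
proof -
  obtain F K \<rho> where \<rho>: "0 < \<rho>" "\<rho> \<le> r_lin" and F: "K-lipschitz_on UNIV F" "\<And>x. \<bar>F x\<bar> \<le> 1/8"
    and F_slope: "\<And>x. x \<in> cball 0 \<rho> \<Longrightarrow> F x = slope x \<and> contact_coeff (0, 1) x \<noteq> 0"
    by (rule bounded_lipschitz_slope_extension) blast
  obtain \<epsilon> where \<epsilon>: "0 < \<epsilon>" "\<epsilon> \<le> \<rho> / 3" and picard: "picard_iteration F K (1/8) \<epsilon> (1/8)"
    using picard_iteration_on_small_interval[OF F, of "1/8" "\<rho> / 3"] \<rho> by auto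
  interpret picard_iteration F K "1/8" \<epsilon> "1/8"
    by (fact picard)
  define \<Psi> where "\<Psi> z = (fst z, solution (snd z) (fst z))" for z
  have square: "z \<in> cbox (-\<epsilon>, -\<epsilon>) (\<epsilon>, \<epsilon>) \<longleftrightarrow> fst z \<in> {-\<epsilon>..\<epsilon>} \<and> snd z \<in> {-\<epsilon>..\<epsilon>}" for z
    by (cases z) (simp add: cbox_Pair_eq)
  have graph: "(u, solution v u) \<in> cball 0 \<rho>" if "u \<in> {-\<epsilon>..\<epsilon>}" "v \<in> {-\<epsilon>..\<epsilon>}" for u v
    using norm_graph_le[OF that] \<epsilon> by simp
  have bi_lipschitz: "bi_lipschitz_on 2 (cbox (-\<epsilon>, -\<epsilon>) (\<epsilon>, \<epsilon>)) (\<lambda>z. P (\<Psi> z))"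
  proof (rule bi_lipschitz_on_P_comp)
    show "\<Psi> z \<in> cball 0 r_lin" if "z \<in> cbox (-\<epsilon>, -\<epsilon>) (\<epsilon>, \<epsilon>)" for z
      using graph[of "fst z" "snd z"] that \<rho> by (auto simp: \<Psi>_def square)
    show "norm (\<Psi> z - \<Psi> z' - (z - z')) \<le> norm (z - z') / 4"
      if "z \<in> cbox (-\<epsilon>, -\<epsilon>) (\<epsilon>, \<epsilon>)" "z' \<in> cbox (-\<epsilon>, -\<epsilon>) (\<epsilon>, \<epsilon>)" for z z'
      using graph_map_near_identity[of "fst z" "fst z'" "snd z" "snd z'"] that by (simp add: \<Psi>_def square)
  qed
  have "horizontal_curve (-\<epsilon>) \<epsilon> (\<lambda>u. P (u, solution v u))" if v: "v \<in> {-\<epsilon>..\<epsilon>}" for v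
  proof (rule horizontal_curve_along_slope_field)
    show "2-lipschitz_on {-\<epsilon>..\<epsilon>} (\<lambda>u. P (u, solution v u))"
      using lipschitz_on_section_if_bi_lipschitz_on[OF bi_lipschitz, of "{-\<epsilon>..\<epsilon>}" v] v
      by (simp add: \<Psi>_def square)
    fix t assume t: "t \<in> {-\<epsilon><..<\<epsilon>}"
    then have "(t, solution v t) \<in> cball 0 \<rho>"
      using graph v by simp
    then show "(solution v has_real_derivative slope (t, solution v t)) (at t)"
      "(t, solution v t) \<in> cball 0 r \<and> contact_coeff (0, 1) (t, solution v t) \<noteq> 0"
      using solution_has_real_derivative[OF t, of v] F_slope \<rho> r_lin by auto
  qed
  moreover have "(\<lambda>z. P (\<Psi> z)) ` cbox (-\<epsilon>, -\<epsilon>) (\<epsilon>, \<epsilon>) \<subseteq> P ` cball 0 r"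
    using graph \<rho> r_lin by (force simp: \<Psi>_def square)
  ultimately show ?thesis
    using \<epsilon> bi_lipschitz
    by (intro exI[of _ \<epsilon>] conjI exI[of _ "\<lambda>z. P (\<Psi> z)"]) (simp_all add: \<Psi>_def zero_prod_def)
qed

end

lemma has_derivative_comp_affine:
  assumes "bounded_linear A" "(\<phi> has_derivative D) (at (q0 + A x))"
  shows "((\<lambda>x. \<phi> (q0 + A x)) has_derivative (\<lambda>h. D (A h))) (at x)"
proof -
  have "((\<lambda>x. q0 + A x) has_derivative A) (at x)"
    using assms(1) by (auto intro!: derivative_eq_intros bounded_linear_imp_has_derivative)
  from diff_chain_at[OF this assms(2)] show ?thesis
    by (simp add: o_def)
qed

lemma cball_in_affine_preimage:
  assumes "open V" "q0 \<in> V" "bounded_linear A"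
  shows "\<exists>r>0. \<forall>x\<in>cball 0 r. q0 + A x \<in> V"
proof -
  have "open ((\<lambda>x. q0 + A x) -` V)"
    using assms by (intro continuous_open_vimage continuous_add continuous_const linear_continuous_at)
  moreover have "0 \<in> (\<lambda>x. q0 + A x) -` V"
    using assms(2) linear_0[OF bounded_linear.linear[OF assms(3)]] by simp
  ultimately show ?thesis
    unfolding open_contains_cball by blast
qed

lemma regular_patch_of_chart:
  assumes chart: "c11_chart M V U \<phi> D" and "q0 \<in> V" and "linear A"
    and isometric: "\<And>h. norm (D q0 (A h)) = norm h"
    and "contact_form (\<phi> q0) (D q0 (A (1, 0))) = 0" "contact_form (\<phi> q0) (D q0 (A (0, 1))) \<noteq> 0"
  obtains r C where "regular_patch (\<lambda>x. \<phi> (q0 + A x)) (\<lambda>x h. D (q0 + A x) (A h)) r C"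
    "(\<lambda>x. \<phi> (q0 + A x)) ` cball 0 r \<subseteq> M"
proof -
  have "open V" and derivative: "\<And>q. q \<in> V \<Longrightarrow> (\<phi> has_derivative D q) (at q)"
    using chart unfolding c11_chart_def by simp_all
  obtain \<psi> where hom: "homeomorphism V (M \<inter> U) \<phi> \<psi>"
    using chart unfolding c11_chart_def by blast
  obtain C where lipschitz: "\<And>q1 q2 h. q1 \<in> V \<Longrightarrow> q2 \<in> V \<Longrightarrow> norm (D q1 h - D q2 h) \<le> C * dist q1 q2 * norm h"
    using chart unfolding c11_chart_def by blast
  have "bounded_linear A"
    using \<open>linear A\<close> linear_conv_bounded_linear by blast
  then obtain N where N: "\<And>h. norm (A h) \<le> norm h * N" "N > 0"
    using bounded_linear.pos_bounded by blast
  obtain r where "r > 0" and into: "\<And>x. x \<in> cball 0 r \<Longrightarrow> q0 + A x \<in> V"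
    using cball_in_affine_preimage[OF \<open>open V\<close> \<open>q0 \<in> V\<close> \<open>bounded_linear A\<close>] by blast
  have "regular_patch (\<lambda>x. \<phi> (q0 + A x)) (\<lambda>x h. D (q0 + A x) (A h)) r (max C 0 * N * N)"
  proof
    show "((\<lambda>x. \<phi> (q0 + A x)) has_derivative (\<lambda>h. D (q0 + A x) (A h))) (at x)" if "x \<in> cball 0 r" for x
      using \<open>bounded_linear A\<close> derivative[OF into[OF that]] by (rule has_derivative_comp_affine)
    show "norm (D (q0 + A x) (A h) - D (q0 + A y) (A h)) \<le> max C 0 * N * N * norm (x - y) * norm h"
      if "x \<in> cball 0 r" "y \<in> cball 0 r" for x y h
    proof -
      have "norm (D (q0 + A x) (A h) - D (q0 + A y) (A h)) \<le> max C 0 * norm (A (x - y)) * norm (A h)"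
        using lipschitz[OF into[OF that(1)] into[OF that(2)], of "A h"]
          mult_right_mono[of C "max C 0" "dist (q0 + A x) (q0 + A y) * norm (A h)"]
        by (simp add: dist_norm linear_diff[OF \<open>linear A\<close>] mult.assoc)
      also have "\<dots> \<le> max C 0 * (norm (x - y) * N) * (norm h * N)"
        using N by (intro mult_mono mult_left_mono) auto
      finally show ?thesis
        by (simp add: mult_ac)
    qed
  qed (use \<open>r > 0\<close> \<open>N > 0\<close> isometric assms(5,6) linear_0[OF \<open>linear A\<close>] in simp_all)
  moreover have "\<phi> ` V \<subseteq> M"
    using hom unfolding homeomorphism_def by auto
  then have "(\<lambda>x. \<phi> (q0 + A x)) ` cball 0 r \<subseteq> M"
    using into by auto
  ultimately show ?thesis
    using that by blast
qed

lemma regular_patch_at_H_regular_point: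
  assumes "c11_surface M" "H_regular M p0"
  obtains P DP r C where "regular_patch P DP r C" "P ` cball 0 r \<subseteq> M" "P 0 = p0"
proof -
  obtain V U \<phi> D where "p0 \<in> U" and chart: "c11_chart M V U \<phi> D"
    using assms unfolding c11_surface_def H_regular_def by blast
  then obtain \<psi> where hom: "homeomorphism V (M \<inter> U) \<phi> \<psi>"
    unfolding c11_chart_def by blast
  define q0 where "q0 = \<psi> p0"
  have q0: "q0 \<in> V" "\<phi> q0 = p0"
    using hom \<open>p0 \<in> U\<close> assms(2) unfolding q0_def homeomorphism_def H_regular_def by auto
  have derivative: "(\<phi> has_derivative D q0) (at q0)" and inj: "inj (D q0)"
    using chart q0 unfolding c11_chart_def by auto
  have "linear (D q0)"
    using derivative by (rule has_derivative_linear)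
  obtain h where "contact_form p0 (D q0 h) \<noteq> 0"
    using H_regular_imp_contact_form_nonzero[OF chart \<open>p0 \<in> U\<close> q0 assms(2)] by blast
  then obtain A :: "real \<times> real \<Rightarrow> real \<times> real" where "linear A" "\<And>h. norm (D q0 (A h)) = norm h"
    "contact_form p0 (D q0 (A (1, 0))) = 0" "contact_form p0 (D q0 (A (0, 1))) \<noteq> 0"
    by (rule adapted_isometric_frame[OF \<open>linear (D q0)\<close> inj linear_contact_form]) blast
  then obtain r C where "regular_patch (\<lambda>x. \<phi> (q0 + A x)) (\<lambda>x h. D (q0 + A x) (A h)) r C"
    "(\<lambda>x. \<phi> (q0 + A x)) ` cball 0 r \<subseteq> M"
    using regular_patch_of_chart[OF chart \<open>q0 \<in> V\<close>] q0(2) by blast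
  moreover have "(\<lambda>x. \<phi> (q0 + A x)) 0 = p0"
    using q0 linear_0[OF \<open>linear A\<close>] by simp
  ultimately show ?thesis
    using that by blast
qed

theorem lemma4p4:
  "\<exists>L'::real. L' > 1 \<and>
     (\<forall>M p0. c11_surface M \<and> p0 \<in> M \<and> H_regular M p0 \<longrightarrow>
        (\<exists>\<epsilon>>0. \<exists>G :: real \<times> real \<Rightarrow> real^3.
           G ` cbox (-\<epsilon>, -\<epsilon>) (\<epsilon>, \<epsilon>) \<subseteq> M \<and>
           bi_lipschitz_on L' (cbox (-\<epsilon>, -\<epsilon>) (\<epsilon>, \<epsilon>)) G \<and>
           G (0, 0) = p0 \<and>
           (\<forall>v\<in>{-\<epsilon>..\<epsilon>}. horizontal_curve (-\<epsilon>) \<epsilon> (\<lambda>u. G (u, v)))))"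
proof (rule exI[of _ 2], intro conjI allI impI)
  fix M p0 assume "c11_surface M \<and> p0 \<in> M \<and> H_regular M p0"
  then obtain P DP r C where patch: "regular_patch P DP r C" and "P ` cball 0 r \<subseteq> M" "P 0 = p0"
    using regular_patch_at_H_regular_point by blast
  then show "\<exists>\<epsilon>>0. \<exists>G :: real \<times> real \<Rightarrow> real^3. G ` cbox (-\<epsilon>, -\<epsilon>) (\<epsilon>, \<epsilon>) \<subseteq> M \<and>
      bi_lipschitz_on 2 (cbox (-\<epsilon>, -\<epsilon>) (\<epsilon>, \<epsilon>)) G \<and> G (0, 0) = p0 \<and>
      (\<forall>v\<in>{-\<epsilon>..\<epsilon>}. horizontal_curve (-\<epsilon>) \<epsilon> (\<lambda>u. G (u, v)))"
    using regular_patch.horizontal_bi_lipschitz_parametrization[OF patch] by (meson order_trans)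
qed simp

end
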